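(* Let $V=H^0(\mathbb{P}^2,T_{\mathbb{P}^2})$ (an $8$-dimensional complex vector space) and let $\mathcal{S}\subset V^4$ be the set of ordered $4$-tuples $S=(w_1,\dots,w_4)$ of linearly independent sections generating $T_{\mathbb{P}^2}$ at every point; $\mathcal{S}$ is a nonempty Zariski open subset of $V^4$. Then there is a nonempty Zariski open subset $U\subset\mathcal{S}$ such that for every $S\in U$ the morphism $\phi_S:\mathbb{P}^2\to\mathrm{Gr}(2,\mathbb{C}^4)$ is generically injective (birational onto its image).
   Context: Work over $\mathbb{C}$. $T_{\mathbb{P}^2}$ is the tangent bundle of $\mathbb{P}^2$. $\mathrm{Gr}(2,\mathbb{C}^4)$ is the Grassmannian of $2$-dimensional quotients of $\mathbb{C}^4$, with universal quotient bundle $\mathcal{O}^4\to Q\to 0$. For an ordered $4$-tuple $S=(w_1,\dots,w_4)$ of global sections of $T_{\mathbb{P}^2}$ generating $T_{\mathbb{P}^2}$ at every point, $\phi_S:\mathbb{P}^2\to\mathrm{Gr}(2,\mathbb{C}^4)$ is the morphism sending $x$ to the quotient $\mathbb{C}^4=\mathcal{O}^4_{\mathbb{P}^2}|_x\to T_{\mathbb{P}^2}|_x$ induced by $(a_1,\dots,a_4)\mapsto\sum a_iw_i(x)$; thus $\phi_S^*Q\cong T_{\mathbb{P}^2}$. *)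

theory Defs
  imports "HOL-Analysis.Analysis"
begin

inductive_set polyfun :: "('a \<Rightarrow> complex) set \<Rightarrow> ('a \<Rightarrow> complex) set"
  for C :: "('a \<Rightarrow> complex) set" where
  const: "(\<lambda>x. c) \<in> polyfun C"
| coord: "f \<in> C \<Longrightarrow> f \<in> polyfun C"
| add: "f \<in> polyfun C \<Longrightarrow> g \<in> polyfun C \<Longrightarrow> (\<lambda>x. f x + g x) \<in> polyfun C"
| mult: "f \<in> polyfun C \<Longrightarrow> g \<in> polyfun C \<Longrightarrow> (\<lambda>x. f x * g x) \<in> polyfun C"

definition zariski_closed :: "('a \<Rightarrow> complex) set \<Rightarrow> 'a set \<Rightarrow> 'a set \<Rightarrow> bool" where
  "zariski_closed C X Z \<longleftrightarrow>
     (\<exists>F \<subseteq> polyfun C. Z = {x \<in> X. \<forall>f \<in> F. f x = 0})"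

definition zariski_open :: "('a \<Rightarrow> complex) set \<Rightarrow> 'a set \<Rightarrow> 'a set \<Rightarrow> bool" where
  "zariski_open C X U \<longleftrightarrow> U \<subseteq> X \<and> zariski_closed C X (X - U)"

text \<open>Points of P^2 are represented by nonzero vectors of C^3; two represent the same
point iff they are proportional.  Zariski open subsets of P^2 are represented by the
corresponding cones of nonzero vectors: complements of common zero loci of
homogeneous polynomials.\<close>

definition coords3 :: "(complex^3 \<Rightarrow> complex) set" where
  "coords3 = {(\<lambda>x. x $ i) | i. True}"

definition homogeneous :: "(complex^3 \<Rightarrow> complex) \<Rightarrow> bool" where
  "homogeneous f \<longleftrightarrow> (\<exists>d::nat. \<forall>c x. f (c *s x) = c ^ d * f x)"

definition proj_equiv :: "complex^3 \<Rightarrow> complex^3 \<Rightarrow> bool" where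
  "proj_equiv x y \<longleftrightarrow> (\<exists>c::complex. y = c *s x)"

definition P2_zariski_open :: "(complex^3) set \<Rightarrow> bool" where
  "P2_zariski_open W \<longleftrightarrow> W \<subseteq> {x. x \<noteq> 0} \<and>
     (\<exists>F \<subseteq> polyfun coords3. (\<forall>f \<in> F. homogeneous f) \<and>
        {x. x \<noteq> 0} - W = {x. x \<noteq> 0 \<and> (\<forall>f \<in> F. f x = 0)})"

text \<open>By the Euler sequence, H^0(P^2, T) = gl_3(C) / C*Id, identified with the
traceless matrices sl_3(C).  The section given by A takes the value A v mod v at the
point [v] (tangent space T_[v] = C^3 / C v).\<close>

type_synonym tuple4 = "complex^3^3^4"

definition V4 :: "tuple4 set" where
  "V4 = {S. \<forall>k. trace (S $ k) = 0}"

definition coords_V4 :: "(tuple4 \<Rightarrow> complex) set" where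
  "coords_V4 = {(\<lambda>S. S $ k $ i $ j) | k i j. True}"

definition lin_indep4 :: "tuple4 \<Rightarrow> bool" where
  "lin_indep4 S \<longleftrightarrow>
     (\<forall>a::complex^4. (\<forall>i j. (\<Sum>k\<in>UNIV. a $ k * S $ k $ i $ j) = 0) \<longrightarrow> a = 0)"

definition generates :: "tuple4 \<Rightarrow> bool" where
  "generates S \<longleftrightarrow> (\<forall>v::complex^3. v \<noteq> 0 \<longrightarrow>
     (\<forall>w::complex^3. \<exists>(a::complex^4) (t::complex).
        w = (\<Sum>k\<in>UNIV. a $ k *s (S $ k *v v)) + t *s v))"

definition Sset :: "tuple4 set" where
  "Sset = {S \<in> V4. lin_indep4 S \<and> generates S}"

text \<open>phi_S([v]) is the quotient C^4 -> T_[v], a |-> sum a_k w_k([v]); a point of the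
Grassmannian of 2-dimensional quotients of C^4 is determined by (and identified with)
its kernel, a 2-dimensional subspace of C^4.\<close>
definition phi :: "tuple4 \<Rightarrow> complex^3 \<Rightarrow> (complex^4) set" where
  "phi S v = {a. \<exists>t::complex. (\<Sum>k\<in>UNIV. a $ k *s (S $ k *v v)) = t *s v}"

definition generically_injective :: "tuple4 \<Rightarrow> bool" where
  "generically_injective S \<longleftrightarrow>
     (\<exists>W. P2_zariski_open W \<and> W \<noteq> {} \<and>
        (\<forall>x \<in> W. \<forall>y. y \<noteq> 0 \<and> phi S y = phi S x \<longrightarrow> proj_equiv x y))"

end

theory Submission
  imports Defs
begin

text \<open>
  Write a section as a traceless matrix \<open>A\<close>, with value \<open>A v mod v\<close> at \<open>[v]\<close>.
  Then \<open>a\<close> lies in the kernel \<open>\<phi>\<^sub>S([v])\<close> iff \<open>v\<close> is an eigenvector of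
  \<open>\<Sum> a\<^sub>k A\<^sub>k\<close>, and Cramer's rule for the four vectors \<open>A\<^sub>k v\<close> modulo \<open>v\<close>
  produces two such kernel vectors depending polynomially on \<open>v\<close>.  If
  \<open>\<phi>\<^sub>S([y]) = \<phi>\<^sub>S([x])\<close>, then \<open>x\<close> and \<open>y\<close> are common eigenvectors of the two
  corresponding matrices, hence lie in the kernel of their commutator; wherever a
  \<open>2\<times>2\<close> minor of that commutator (a homogeneous polynomial in \<open>x\<close>) is nonzero, this
  kernel is the line through \<open>x\<close>.  The sections generate \<open>T\<close> at \<open>[v]\<close> unless the six
  cubics \<open>det(v, A\<^sub>i v, A\<^sub>j v)\<close> vanish at \<open>v\<close>; if fifteen of the quartics
  \<open>v\<^sub>m det(v, A\<^sub>i v, A\<^sub>j v)\<close> span all quartics, a common zero would kill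
  \<open>v\<^sub>1\<^sup>4, v\<^sub>2\<^sup>4, v\<^sub>3\<^sup>4\<close>.  Linear independence, this spanning condition and
  the non-vanishing of the minor at \<open>[1:1:1]\<close> are polynomial conditions on \<open>S\<close>,
  and all three hold at one explicit tuple.
\<close>

lemma polyfun_uminus: "f \<in> polyfun C \<Longrightarrow> (\<lambda>x. - f x) \<in> polyfun C"
  using polyfun.mult[OF polyfun.const[of "-1"]] by simp

lemma polyfun_diff: "f \<in> polyfun C \<Longrightarrow> g \<in> polyfun C \<Longrightarrow> (\<lambda>x. f x - g x) \<in> polyfun C"
  using polyfun.add[OF _ polyfun_uminus] by simp

lemma polyfun_sum: "(\<And>a. (\<lambda>x. f a x) \<in> polyfun C) \<Longrightarrow> (\<lambda>x. \<Sum>a\<in>A. f a x) \<in> polyfun C"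
  by (induction A rule: infinite_finite_induct) (simp_all add: polyfun.const polyfun.add)

lemma polyfun_prod: "(\<And>a. (\<lambda>x. f a x) \<in> polyfun C) \<Longrightarrow> (\<lambda>x. \<Prod>a\<in>A. f a x) \<in> polyfun C"
  by (induction A rule: infinite_finite_induct) (simp_all add: polyfun.const polyfun.mult)

lemma polyfun_If: "f \<in> polyfun C \<Longrightarrow> g \<in> polyfun C \<Longrightarrow> (\<lambda>x. if P then f x else g x) \<in> polyfun C"
  by (cases P) simp_all

lemmas polyfun_intros =
  polyfun.const polyfun.add polyfun.mult polyfun_uminus polyfun_diff polyfun_sum polyfun_prod polyfun_If

lemma polyfun_coords3: "(\<lambda>x. x $ i) \<in> polyfun coords3"
  by (rule polyfun.coord) (auto simp: coords3_def)

lemma polyfun_coords_V4: "(\<lambda>S. S $ k $ i $ j) \<in> polyfun coords_V4"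
  by (rule polyfun.coord) (auto simp: coords_V4_def)

lemma polyfun_det:
  fixes f :: "'a \<Rightarrow> complex^'n^'n"
  assumes "\<And>i j. (\<lambda>x. f x $ i $ j) \<in> polyfun C"
  shows "(\<lambda>x. det (f x)) \<in> polyfun C"
  unfolding det_def by (intro polyfun_intros assms)

lemma zariski_open_nonvanishing:
  "f \<in> polyfun C \<Longrightarrow> zariski_open C X {x \<in> X. f x \<noteq> 0}"
  unfolding zariski_open_def zariski_closed_def by (intro conjI exI[of _ "{f}"]) auto

lemma P2_zariski_open_nonvanishing:
  "f \<in> polyfun coords3 \<Longrightarrow> homogeneous f \<Longrightarrow> P2_zariski_open {x. x \<noteq> 0 \<and> f x \<noteq> 0}"
  unfolding P2_zariski_open_def by (intro conjI exI[of _ "{f}"]) auto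

lemma det_nonzero_iff_kernel_trivial:
  fixes A :: "'a::field^'n^'n"
  shows "det A \<noteq> 0 \<longleftrightarrow> (\<forall>x. A *v x = 0 \<longrightarrow> x = 0)"
  by (simp add: invertible_det_nz[symmetric] invertible_left_inverse matrix_left_invertible_ker)

definition det3 :: "'a::comm_ring_1^3 \<Rightarrow> 'a^3 \<Rightarrow> 'a^3 \<Rightarrow> 'a" where
  "det3 a b c = a$1 * (b$2 * c$3 - b$3 * c$2) - a$2 * (b$1 * c$3 - b$3 * c$1) + a$3 * (b$1 * c$2 - b$2 * c$1)"

lemma det3_scale: "det3 (c *s a) (c *s b) (c *s d) = c^3 * det3 a b d"
  by (simp add: det3_def algebra_simps power3_eq_cube)

lemma det3_cramer: "det3 x b c *s a - det3 x a c *s b + det3 x a b *s c = det3 a b c *s x"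
  by (simp add: vec_eq_iff forall_3 det3_def algebra_simps)

lemma det3_cramer_rule:
  fixes a b c w :: "'a::field^3"
  assumes "det3 a b c \<noteq> 0"
  shows "w = (det3 w b c / det3 a b c) *s a - (det3 w a c / det3 a b c) *s b
           + (det3 w a b / det3 a b c) *s c"
proof -
  let ?d = "det3 a b c"
  have "w$l = (det3 w b c * a$l - det3 w a c * b$l + det3 w a b * c$l) / ?d" for l
  proof -
    have "?d * w$l = det3 w b c * a$l - det3 w a c * b$l + det3 w a b * c$l"
      using det3_cramer[of w b c a] by (simp add: vec_eq_iff)
    then show ?thesis using assms by (simp add: field_simps)
  qed
  then show ?thesis by (simp add: vec_eq_iff add_divide_distrib diff_divide_distrib)
qed

lemma kernel_of_rank2_is_line:
  fixes M :: "'a::field^3^3"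
  assumes x: "M *v x = 0" and y: "M *v y = 0" and x_nz: "x \<noteq> 0"
    and minor: "M$p$1 * M$q$2 - M$p$2 * M$q$1 \<noteq> 0"
  shows "\<exists>c. y = c *s x"
proof -
  define \<Delta> where "\<Delta> = M$p$1 * M$q$2 - M$p$2 * M$q$1"
  \<comment> \<open>the cross product of rows \<open>p\<close> and \<open>q\<close>\<close>
  define n :: "'a^3" where
    "n = vector [M$p$2 * M$q$3 - M$p$3 * M$q$2, M$p$3 * M$q$1 - M$p$1 * M$q$3, \<Delta>]"
  have line: "\<Delta> *s z = z$3 *s n" if "M *v z = 0" for z
  proof -
    have "\<Delta> * z$1 - n$1 * z$3 = M$q$2 * (M *v z)$p - M$p$2 * (M *v z)$q"
      "\<Delta> * z$2 - n$2 * z$3 = M$p$1 * (M *v z)$q - M$q$1 * (M *v z)$p"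
      by (simp_all add: \<Delta>_def n_def matrix_vector_mult_def sum_3 algebra_simps)
    moreover have "(M *v z)$p = 0" "(M *v z)$q = 0" using that by simp_all
    ultimately show ?thesis by (simp add: vec_eq_iff forall_3 n_def mult.commute)
  qed
  have "\<Delta> \<noteq> 0" using minor by (simp add: \<Delta>_def)
  then have "x$3 \<noteq> 0" using line[OF x] x_nz by auto
  then have "\<Delta> *s ((y$3 / x$3) *s x) = (y$3 / x$3) *s (x$3 *s n)"
    using line[OF x] by (metis vector_smult_assoc mult.commute)
  also have "\<dots> = \<Delta> *s y"
    using \<open>x$3 \<noteq> 0\<close> line[OF y] by (simp add: vector_smult_assoc)
  finally have "\<Delta> *s y = \<Delta> *s ((y$3 / x$3) *s x)" ..
  then have "y = (y$3 / x$3) *s x" using \<open>\<Delta> \<noteq> 0\<close> unfolding vector_mul_lcancel by blast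
  then show ?thesis ..
qed

section \<open>The fibres of \<open>phi\<close>\<close>

definition pair_det :: "tuple4 \<Rightarrow> 4 \<Rightarrow> 4 \<Rightarrow> complex^3 \<Rightarrow> complex" where
  "pair_det S i j v = det3 v (S$i *v v) (S$j *v v)"

definition comb_matrix :: "tuple4 \<Rightarrow> complex^4 \<Rightarrow> complex^3^3" where
  "comb_matrix S a = (\<chi> i j. \<Sum>k\<in>UNIV. a$k * S$k$i$j)"

lemma comb_matrix_mult_vec: "comb_matrix S a *v y = (\<Sum>k\<in>UNIV. a$k *s (S$k *v y))"
  by (simp add: vec_eq_iff forall_3 matrix_vector_mult_def comb_matrix_def sum_3 sum_4 algebra_simps)

lemma phi_iff_eigenvector: "a \<in> phi S y \<longleftrightarrow> (\<exists>t. comb_matrix S a *v y = t *s y)"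
  by (simp add: phi_def comb_matrix_mult_vec)

lemma sum_axis_scale:
  fixes f :: "'n::finite \<Rightarrow> 'a::comm_ring_1^'m"
  shows "(\<Sum>l\<in>UNIV. axis i c $ l *s f l) = c *s f i"
proof -
  have "axis i c $ l *s f l = (if l = i then c *s f i else 0)" for l
    by (simp add: axis_def)
  then show ?thesis by (simp add: vector_smult_lzero)
qed

definition cramer_relation :: "tuple4 \<Rightarrow> 4 \<Rightarrow> 4 \<Rightarrow> 4 \<Rightarrow> complex^3 \<Rightarrow> complex^4" where
  "cramer_relation S i j k v =
     axis i (pair_det S j k v) - axis j (pair_det S i k v) + axis k (pair_det S i j v)"

lemma cramer_relation_in_phi: "cramer_relation S i j k v \<in> phi S v"
proof -
  have "(\<Sum>l\<in>UNIV. cramer_relation S i j k v $ l *s (S$l *v v))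
      = pair_det S j k v *s (S$i *v v) - pair_det S i k v *s (S$j *v v) + pair_det S i j v *s (S$k *v v)"
    by (simp add: cramer_relation_def sum.distrib sum_subtractf sum_axis_scale)
  also have "\<dots> = det3 (S$i *v v) (S$j *v v) (S$k *v v) *s v"
    unfolding pair_det_def by (rule det3_cramer)
  finally show ?thesis unfolding phi_def by blast
qed

lemma generates_at_if_pair_det_nonzero:
  assumes "pair_det S i j v \<noteq> 0"
  shows "\<exists>(a::complex^4) t. w = (\<Sum>k\<in>UNIV. a $ k *s (S $ k *v v)) + t *s v"
proof -
  define d where "d = pair_det S i j v"
  let ?a = "axis j (det3 w v (S$i *v v) / d) - axis i (det3 w v (S$j *v v) / d)"
  have "w = (det3 w (S$i *v v) (S$j *v v) / d) *s v - (det3 w v (S$j *v v) / d) *s (S$i *v v)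
            + (det3 w v (S$i *v v) / d) *s (S$j *v v)"
    using det3_cramer_rule assms unfolding d_def pair_det_def by blast
  also have "\<dots> = (\<Sum>k\<in>UNIV. ?a $ k *s (S $ k *v v)) + (det3 w (S$i *v v) (S$j *v v) / d) *s v"
    by (simp add: sum.distrib sum_subtractf sum_axis_scale algebra_simps)
  finally show ?thesis by blast
qed

definition commutator :: "'a::comm_ring_1^'n^'n \<Rightarrow> 'a^'n^'n \<Rightarrow> 'a^'n^'n" where
  "commutator A B = A ** B - B ** A"

lemma commutator_mult_common_eigenvector:
  fixes A B :: "'a::field^'n^'n"
  assumes "A *v y = s *s y" "B *v y = t *s y"
  shows "commutator A B *v y = 0"
  using assms
  by (simp add: commutator_def matrix_vector_mult_diff_rdistrib matrix_vector_mul_assoc[symmetric]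
      vector_scalar_commute)

lemma commutator_scale:
  fixes A B A' B' :: "'a::comm_ring_1^'n^'n"
  assumes "\<And>i j. A' $ i $ j = d * A $ i $ j" "\<And>i j. B' $ i $ j = e * B $ i $ j"
  shows "commutator A' B' $ i $ j = (d * e) * commutator A B $ i $ j"
  by (simp add: commutator_def matrix_matrix_mult_def assms sum_distrib_left
      right_diff_distrib sum_subtractf[symmetric] mult_ac)

definition fibre_matrix :: "tuple4 \<Rightarrow> complex^3 \<Rightarrow> complex^3^3" where
  "fibre_matrix S x = commutator (comb_matrix S (cramer_relation S 1 2 3 x))
                                 (comb_matrix S (cramer_relation S 1 2 4 x))"

text \<open>Any \<open>2\<times>2\<close> minor would do; this one is nonzero at the witness.\<close>

definition fibre_minor :: "tuple4 \<Rightarrow> complex^3 \<Rightarrow> complex" where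
  "fibre_minor S x =
     fibre_matrix S x $1$1 * fibre_matrix S x $3$2 - fibre_matrix S x $1$2 * fibre_matrix S x $3$1"

lemma fibre_matrix_kernel:
  assumes "phi S y = phi S x"
  shows "fibre_matrix S x *v y = 0"
proof -
  obtain s t where "comb_matrix S (cramer_relation S 1 2 3 x) *v y = s *s y"
      "comb_matrix S (cramer_relation S 1 2 4 x) *v y = t *s y"
    using cramer_relation_in_phi[of S _ _ _ x] assms by (metis phi_iff_eigenvector)
  then show ?thesis unfolding fibre_matrix_def by (rule commutator_mult_common_eigenvector)
qed

lemma fibre_singleton_if_fibre_minor_nonzero:
  assumes "fibre_minor S x \<noteq> 0" "x \<noteq> 0" "phi S y = phi S x"
  shows "proj_equiv x y"
  unfolding proj_equiv_def
  using kernel_of_rank2_is_line[OF fibre_matrix_kernel[OF refl] fibre_matrix_kernel[OF assms(3)]]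
    assms(1,2) by (simp add: fibre_minor_def)

lemma fibre_minor_homogeneous: "homogeneous (fibre_minor S)"
proof -
  have cramer: "cramer_relation S i j k (c *s x) = c^3 *s cramer_relation S i j k x" for c i j k x
    by (simp add: cramer_relation_def pair_det_def vector_scalar_commute det3_scale vec_eq_iff
        axis_def algebra_simps)
  have comb: "comb_matrix S (d *s a) $ i $ j = d * comb_matrix S a $ i $ j" for d a i j
    by (simp add: comb_matrix_def sum_distrib_left mult.assoc)
  have "fibre_matrix S (c *s x) $ i $ j = (c^3 * c^3) * fibre_matrix S x $ i $ j" for c x i j
    unfolding fibre_matrix_def by (rule commutator_scale) (simp_all only: cramer comb)
  then have "fibre_minor S (c *s x) = c^12 * fibre_minor S x" for c x
    by (simp add: fibre_minor_def algebra_simps flip: power_add)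
  then show ?thesis unfolding homogeneous_def by blast
qed

context
  fixes C :: "('p \<Rightarrow> complex) set" and S :: "'p \<Rightarrow> tuple4" and x :: "'p \<Rightarrow> complex^3"
  assumes polyfun_S: "\<And>k i j. (\<lambda>p. S p $ k $ i $ j) \<in> polyfun C"
    and polyfun_x: "\<And>i. (\<lambda>p. x p $ i) \<in> polyfun C"
begin

lemma polyfun_pair_det: "(\<lambda>p. pair_det (S p) i j (x p)) \<in> polyfun C"
  unfolding pair_det_def det3_def matrix_vector_mult_def
  by (simp only: vec_lambda_beta) (intro polyfun_intros polyfun_S polyfun_x)

lemma polyfun_comb_matrix_cramer_relation:
  "(\<lambda>p. comb_matrix (S p) (cramer_relation (S p) i j k (x p)) $ m $ n) \<in> polyfun C"
  unfolding comb_matrix_def cramer_relation_def axis_def vector_add_component vector_minus_component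
    vec_lambda_beta
  by (intro polyfun_intros polyfun_S polyfun_pair_det)

lemma polyfun_fibre_minor: "(\<lambda>p. fibre_minor (S p) (x p)) \<in> polyfun C"
  unfolding fibre_minor_def fibre_matrix_def commutator_def matrix_matrix_mult_def
    vector_minus_component vec_lambda_beta
  by (intro polyfun_intros polyfun_comb_matrix_cramer_relation)

end

lemma fibre_minor_polyfun_point: "fibre_minor S \<in> polyfun coords3"
  using polyfun_fibre_minor[of "\<lambda>_. S" coords3 "\<lambda>x. x"] polyfun.const polyfun_coords3 by blast

lemma fibre_minor_polyfun_tuple: "(\<lambda>S. fibre_minor S x) \<in> polyfun coords_V4"
  using polyfun_fibre_minor[of "\<lambda>S. S" coords_V4 "\<lambda>_. x"] polyfun.const polyfun_coords_V4 by blast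

lemma generically_injective_if_fibre_minor_nonzero:
  assumes "fibre_minor S x \<noteq> 0" "x \<noteq> 0"
  shows "generically_injective S"
  unfolding generically_injective_def
proof (intro exI conjI)
  show "P2_zariski_open {x. x \<noteq> 0 \<and> fibre_minor S x \<noteq> 0}"
    by (rule P2_zariski_open_nonvanishing[OF fibre_minor_polyfun_point fibre_minor_homogeneous])
  show "{x. x \<noteq> 0 \<and> fibre_minor S x \<noteq> 0} \<noteq> {}" using assms by blast
qed (auto intro: fibre_singleton_if_fibre_minor_nonzero)

section \<open>Generation via a Macaulay matrix\<close>

definition cubic_exps :: "(nat \<times> nat \<times> nat) set" where
  "cubic_exps = {(3,0,0), (2,1,0), (2,0,1), (1,2,0), (1,1,1), (1,0,2), (0,3,0), (0,2,1), (0,1,2), (0,0,3)}"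

definition quartic_exps :: "(nat \<times> nat \<times> nat) set" where
  "quartic_exps = {(4,0,0), (3,1,0), (3,0,1), (2,2,0), (2,1,1), (2,0,2), (1,3,0), (1,2,1), (1,1,2),
     (1,0,3), (0,4,0), (0,3,1), (0,2,2), (0,1,3), (0,0,4)}"

fun monomial :: "nat \<times> nat \<times> nat \<Rightarrow> complex^3 \<Rightarrow> complex" where
  "monomial (a, b, c) v = v$1^a * v$2^b * v$3^c"

text \<open>Coefficient of the monomial \<open>t\<close> in the cubic \<open>det3 v (A *v v) (B *v v)\<close>.\<close>

definition pair_det_coeff :: "complex^3^3 \<Rightarrow> complex^3^3 \<Rightarrow> nat \<times> nat \<times> nat \<Rightarrow> complex" where
 "pair_det_coeff A B t = (if t = (0,0,3) then A$1$3 * B$2$3 - A$2$3 * B$1$3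
  else if t = (0,1,2) then - A$1$3 * B$3$3 + A$3$3 * B$1$3 + A$1$2 * B$2$3 + A$1$3 * B$2$2 - A$2$2 * B$1$3 - A$2$3 * B$1$2
  else if t = (0,2,1) then - A$1$2 * B$3$3 - A$1$3 * B$3$2 + A$3$2 * B$1$3 + A$3$3 * B$1$2 + A$1$2 * B$2$2 - A$2$2 * B$1$2
  else if t = (0,3,0) then - A$1$2 * B$3$2 + A$3$2 * B$1$2
  else if t = (1,0,2) then A$2$3 * B$3$3 - A$3$3 * B$2$3 + A$1$1 * B$2$3 + A$1$3 * B$2$1 - A$2$1 * B$1$3 - A$2$3 * B$1$1
  else if t = (1,1,1) then A$2$2 * B$3$3 + A$2$3 * B$3$2 - A$3$2 * B$2$3 - A$3$3 * B$2$2 - A$1$1 * B$3$3 - A$1$3 * B$3$1 + A$3$1 * B$1$3 + A$3$3 * B$1$1 + A$1$1 * B$2$2 + A$1$2 * B$2$1 - A$2$1 * B$1$2 - A$2$2 * B$1$1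
  else if t = (1,2,0) then A$2$2 * B$3$2 - A$3$2 * B$2$2 - A$1$1 * B$3$2 - A$1$2 * B$3$1 + A$3$1 * B$1$2 + A$3$2 * B$1$1
  else if t = (2,0,1) then A$2$1 * B$3$3 + A$2$3 * B$3$1 - A$3$1 * B$2$3 - A$3$3 * B$2$1 + A$1$1 * B$2$1 - A$2$1 * B$1$1
  else if t = (2,1,0) then A$2$1 * B$3$2 + A$2$2 * B$3$1 - A$3$1 * B$2$2 - A$3$2 * B$2$1 - A$1$1 * B$3$1 + A$3$1 * B$1$1
  else if t = (3,0,0) then A$2$1 * B$3$1 - A$3$1 * B$2$1
  else 0)"

lemma pair_det_expansion:
  "det3 v (A *v v) (B *v v) = (\<Sum>t\<in>cubic_exps. pair_det_coeff A B t * monomial t v)"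
  by (simp add: cubic_exps_def pair_det_coeff_def det3_def matrix_vector_mult_def sum_3
      algebra_simps power2_eq_square power3_eq_cube)

fun shifted_coeff :: "complex^3^3 \<Rightarrow> complex^3^3 \<Rightarrow> 3 \<Rightarrow> nat \<times> nat \<times> nat \<Rightarrow> complex" where
  "shifted_coeff A B m (a, b, c) =
     (if m = 1 then (if a \<ge> 1 then pair_det_coeff A B (a - 1, b, c) else 0)
      else if m = 2 then (if b \<ge> 1 then pair_det_coeff A B (a, b - 1, c) else 0)
      else (if c \<ge> 1 then pair_det_coeff A B (a, b, c - 1) else 0))"

lemma shifted_coeff_expansion:
  "(\<Sum>t\<in>quartic_exps. shifted_coeff A B m t * monomial t v) = v$m * det3 v (A *v v) (B *v v)"
proof -
  have "m = 1 \<or> m = 2 \<or> m = 3" using exhaust_3 by blast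
  then have "(\<Sum>t\<in>quartic_exps. shifted_coeff A B m t * monomial t v)
      = v$m * (\<Sum>t\<in>cubic_exps. pair_det_coeff A B t * monomial t v)"
    by (elim disjE) (simp_all add: quartic_exps_def cubic_exps_def algebra_simps
        power2_eq_square power3_eq_cube power4_eq_xxxx)
  then show ?thesis by (simp only: pair_det_expansion)
qed

typedef quartic = quartic_exps
  by (auto simp: quartic_exps_def)

instance quartic :: finite
proof
  have "(UNIV :: quartic set) = Abs_quartic ` quartic_exps"
    using type_definition.univ[OF type_definition_quartic] .
  moreover have "finite quartic_exps" by (simp add: quartic_exps_def)
  ultimately show "finite (UNIV :: quartic set)" by (metis finite_imageI)
qed

lemma sum_quartic: "(\<Sum>r\<in>UNIV. h (Rep_quartic r)) = (\<Sum>t\<in>quartic_exps. h t)"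
  using sum.reindex[of Rep_quartic UNIV h] type_definition.Rep_range[OF type_definition_quartic]
  by (simp add: inj_def Rep_quartic_inject)

text \<open>
  For each quartic exponent \<open>t\<close> a triple \<open>(m, i, j)\<close>; row \<open>t\<close> of the Macaulay matrix
  holds the coefficients of \<open>v\<^sub>m * pair_det S i j v\<close>.  The choice is made so that the
  matrix is invertible for the witness tuple below.
\<close>

definition macaulay_choice :: "nat \<times> nat \<times> nat \<Rightarrow> 3 \<times> 4 \<times> 4" where
 "macaulay_choice t = (if t = (1,2,1) then (1,1,2)
   else if t = (0,3,1) then (2,1,2)
   else if t = (0,2,2) then (3,1,2)
   else if t = (0,0,4) then (3,1,3)
   else if t = (0,4,0) then (2,2,3)
   else if t = (0,1,3) then (2,1,3)
   else if t = (1,1,2) then (3,2,3)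
   else if t = (2,2,0) then (2,1,4)
   else if t = (3,1,0) then (1,2,4)
   else if t = (2,0,2) then (1,1,4)
   else if t = (2,1,1) then (3,2,4)
   else if t = (1,0,3) then (3,1,4)
   else if t = (1,3,0) then (1,1,3)
   else if t = (4,0,0) then (1,3,4)
   else if t = (3,0,1) then (3,3,4)
   else (1,1,2))"

definition macaulay_matrix :: "tuple4 \<Rightarrow> complex^quartic^quartic" where
  "macaulay_matrix S = (\<chi> c r. case macaulay_choice (Rep_quartic c) of
     (m, i, j) \<Rightarrow> shifted_coeff (S$i) (S$j) m (Rep_quartic r))"

definition monomial_vec :: "complex^3 \<Rightarrow> complex^quartic" where
  "monomial_vec v = (\<chi> r. monomial (Rep_quartic r) v)"

lemma macaulay_matrix_mult_monomial_vec:
  assumes "macaulay_choice (Rep_quartic c) = (m, i, j)"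
  shows "(macaulay_matrix S *v monomial_vec v) $ c = v$m * pair_det S i j v"
proof -
  have "(macaulay_matrix S *v monomial_vec v) $ c
      = (\<Sum>r\<in>UNIV. shifted_coeff (S$i) (S$j) m (Rep_quartic r) * monomial (Rep_quartic r) v)"
    by (simp add: macaulay_matrix_def monomial_vec_def matrix_vector_mult_def assms)
  also have "\<dots> = v$m * pair_det S i j v"
    using sum_quartic[of "\<lambda>t. shifted_coeff (S$i) (S$j) m t * monomial t v"]
    by (simp add: shifted_coeff_expansion pair_det_def)
  finally show ?thesis .
qed

lemma monomial_vec_nonzero: "v \<noteq> 0 \<Longrightarrow> monomial_vec v \<noteq> 0"
proof -
  assume "v \<noteq> 0"
  then obtain m where "v$m \<noteq> 0" by (auto simp: vec_eq_iff)
  moreover have "m = 1 \<or> m = 2 \<or> m = 3" using exhaust_3 by blast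
  then have "monomial_vec v $ Abs_quartic (if m = 1 then (4,0,0) else if m = 2 then (0,4,0) else (0,0,4))
      = v$m^4"
    by (auto simp: monomial_vec_def Abs_quartic_inverse quartic_exps_def)
  ultimately show "monomial_vec v \<noteq> 0" by (metis power_not_zero zero_index)
qed

lemma pair_det_nonzero_if_macaulay_det_nonzero:
  assumes "det (macaulay_matrix S) \<noteq> 0" "v \<noteq> 0"
  shows "\<exists>i j. pair_det S i j v \<noteq> 0"
proof (rule ccontr)
  assume all_zero: "\<not> ?thesis"
  have "(macaulay_matrix S *v monomial_vec v) $ c = 0" for c
  proof -
    obtain m i j where "macaulay_choice (Rep_quartic c) = (m, i, j)" by (metis prod_cases3)
    then show ?thesis using all_zero by (simp add: macaulay_matrix_mult_monomial_vec)
  qed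
  then have "macaulay_matrix S *v monomial_vec v = 0" by (simp add: vec_eq_iff)
  with assms monomial_vec_nonzero show False
    using det_nonzero_iff_kernel_trivial by blast
qed

lemma generates_if_macaulay_det_nonzero:
  assumes "det (macaulay_matrix S) \<noteq> 0"
  shows "generates S"
  unfolding generates_def
proof (intro allI impI)
  fix v w :: "complex^3"
  assume "v \<noteq> 0"
  then obtain i j where "pair_det S i j v \<noteq> 0"
    using pair_det_nonzero_if_macaulay_det_nonzero assms by blast
  then show "\<exists>a t. w = (\<Sum>k\<in>UNIV. a $ k *s (S $ k *v v)) + t *s v"
    by (rule generates_at_if_pair_det_nonzero)
qed

lemma polyfun_pair_det_coeff: "(\<lambda>S. pair_det_coeff (S$i) (S$j) t) \<in> polyfun coords_V4"
  unfolding pair_det_coeff_def by (intro polyfun_intros polyfun_coords_V4)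

lemma polyfun_macaulay_det: "(\<lambda>S. det (macaulay_matrix S)) \<in> polyfun coords_V4"
proof (rule polyfun_det)
  fix c r
  obtain m i j where "macaulay_choice (Rep_quartic c) = (m, i, j)" by (metis prod_cases3)
  moreover obtain a b e where "Rep_quartic r = (a, b, e)" by (metis prod_cases3)
  ultimately show "(\<lambda>S. macaulay_matrix S $ c $ r) \<in> polyfun coords_V4"
    by (simp add: macaulay_matrix_def) (intro polyfun_If polyfun.const polyfun_pair_det_coeff)
qed

definition entry_submatrix :: "tuple4 \<Rightarrow> (4 \<Rightarrow> 3 \<times> 3) \<Rightarrow> complex^4^4" where
  "entry_submatrix S pos = (\<chi> k l. S $ k $ fst (pos l) $ snd (pos l))"

lemma lin_indep4_if_entry_submatrix_det_nonzero:
  assumes "det (entry_submatrix S pos) \<noteq> 0"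
  shows "lin_indep4 S"
  unfolding lin_indep4_def
proof (intro allI impI)
  fix a :: "complex^4"
  assume "\<forall>i j. (\<Sum>k\<in>UNIV. a $ k * S $ k $ i $ j) = 0"
  then have "transpose (entry_submatrix S pos) *v a = 0"
    by (simp add: vec_eq_iff matrix_vector_mult_def transpose_def entry_submatrix_def mult.commute)
  moreover have "det (transpose (entry_submatrix S pos)) \<noteq> 0" using assms by simp
  ultimately show "a = 0" using det_nonzero_iff_kernel_trivial by blast
qed

lemma polyfun_entry_submatrix_det: "(\<lambda>S. det (entry_submatrix S pos)) \<in> polyfun coords_V4"
  by (rule polyfun_det) (simp add: entry_submatrix_def polyfun_coords_V4)

definition witness_tuple :: tuple4 where
  "witness_tuple = (\<chi> k i j.
     if k = 1 then (if (i, j) = (1, 3) \<or> (i, j) = (3, 2) then 1 else 0)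
     else if k = 2 then (if (i, j) = (3, 2) then 1 else 0)
     else if k = 3 then (if (i, j) = (1, 2) \<or> (i, j) = (2, 3) then 1 else if (i, j) = (3, 1) then -1 else 0)
     else (if (i, j) = (2, 1) then -1 else 0))"

definition witness_positions :: "4 \<Rightarrow> 3 \<times> 3" where
  "witness_positions l = (if l = 1 then (1, 3) else if l = 2 then (3, 2) else if l = 3 then (1, 2) else (2, 1))"

definition witness_point :: "complex^3" where
  "witness_point = (\<chi> i. 1)"

lemma witness_point_nonzero: "witness_point \<noteq> 0"
  by (metis one_neq_zero vec_lambda_beta witness_point_def zero_index)

lemma witness_tuple_in_V4: "witness_tuple \<in> V4"
  by (simp add: V4_def witness_tuple_def trace_def sum_3 forall_4)

lemma witness_entry_submatrix_det: "det (entry_submatrix witness_tuple witness_positions) \<noteq> 0"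
  unfolding det_nonzero_iff_kernel_trivial
proof (intro allI impI)
  fix z :: "complex^4"
  assume "entry_submatrix witness_tuple witness_positions *v z = 0"
  then have "\<forall>k. (entry_submatrix witness_tuple witness_positions *v z) $ k = 0" by simp
  then show "z = 0"
    by (auto simp add: forall_4 vec_eq_iff matrix_vector_mult_def sum_4 entry_submatrix_def
        witness_positions_def witness_tuple_def)
qed

lemma witness_macaulay_det: "det (macaulay_matrix witness_tuple) \<noteq> 0"
  unfolding det_nonzero_iff_kernel_trivial
proof (intro allI impI)
  fix z :: "complex^quartic"
  assume z: "macaulay_matrix witness_tuple *v z = 0"
  define zz where "zz t = z $ Abs_quartic t" for t
  have eq: "(\<Sum>t\<in>quartic_exps. (case macaulay_choice t' of (m, i, j) \<Rightarrow>
      shifted_coeff (witness_tuple$i) (witness_tuple$j) m t) * zz t) = 0" if t': "t' \<in> quartic_exps" for t'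
  proof -
    have "(macaulay_matrix witness_tuple *v z) $ Abs_quartic t' = 0" using z by simp
    then show ?thesis
      using sum_quartic[of "\<lambda>t. (case macaulay_choice t' of (m, i, j) \<Rightarrow>
          shifted_coeff (witness_tuple$i) (witness_tuple$j) m t) * zz t"]
      by (simp add: macaulay_matrix_def matrix_vector_mult_def zz_def Rep_quartic_inverse
          Abs_quartic_inverse[OF t'])
  qed
  have zero: "\<forall>t\<in>quartic_exps. zz t = 0"
    using eq[of "(1,2,1)"] eq[of "(0,3,1)"] eq[of "(0,2,2)"] eq[of "(0,0,4)"] eq[of "(0,4,0)"]
      eq[of "(0,1,3)"] eq[of "(1,1,2)"] eq[of "(2,2,0)"] eq[of "(3,1,0)"] eq[of "(2,0,2)"]
      eq[of "(2,1,1)"] eq[of "(1,0,3)"] eq[of "(1,3,0)"] eq[of "(4,0,0)"] eq[of "(3,0,1)"]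
    by (simp add: quartic_exps_def macaulay_choice_def pair_det_coeff_def witness_tuple_def)
  have "z $ r = 0" for r
    using zero[rule_format, OF Rep_quartic[of r]] by (simp add: zz_def Rep_quartic_inverse)
  then show "z = 0" by (simp add: vec_eq_iff)
qed

lemma witness_fibre_minor: "fibre_minor witness_tuple witness_point = 4"
proof -
  have pair_det:
    "pair_det witness_tuple 2 3 witness_point = 0" "pair_det witness_tuple 1 3 witness_point = 2"
    "pair_det witness_tuple 1 2 witness_point = -1" "pair_det witness_tuple 2 4 witness_point = 1"
    "pair_det witness_tuple 1 4 witness_point = 0"
    by (simp_all add: pair_det_def det3_def matrix_vector_mult_def sum_3 witness_tuple_def
        witness_point_def)
  have "comb_matrix witness_tuple (cramer_relation witness_tuple 1 2 3 witness_point) $ i $ j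
      = -2 * witness_tuple $ 2 $ i $ j - witness_tuple $ 3 $ i $ j" for i j
    by (simp add: comb_matrix_def cramer_relation_def axis_def pair_det sum_4)
  moreover have "comb_matrix witness_tuple (cramer_relation witness_tuple 1 2 4 witness_point) $ i $ j
      = witness_tuple $ 1 $ i $ j - witness_tuple $ 4 $ i $ j" for i j
    by (simp add: comb_matrix_def cramer_relation_def axis_def pair_det sum_4)
  ultimately show ?thesis
    by (simp add: fibre_minor_def fibre_matrix_def commutator_def matrix_matrix_mult_def sum_3
        witness_tuple_def)
qed

theorem theorem1:
  shows "\<exists>U. zariski_open coords_V4 V4 U \<and> U \<noteq> {} \<and> U \<subseteq> Sset \<and>
           (\<forall>S \<in> U. generically_injective S)"
proof -
  define P where "P S = det (entry_submatrix S witness_positions) * det (macaulay_matrix S)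
    * fibre_minor S witness_point" for S
  have "P \<in> polyfun coords_V4"
    unfolding P_def by (intro polyfun.mult polyfun_entry_submatrix_det polyfun_macaulay_det
        fibre_minor_polyfun_tuple)
  then have "zariski_open coords_V4 V4 {S \<in> V4. P S \<noteq> 0}"
    by (rule zariski_open_nonvanishing)
  moreover have "witness_tuple \<in> {S \<in> V4. P S \<noteq> 0}"
    using witness_tuple_in_V4 witness_entry_submatrix_det witness_macaulay_det witness_fibre_minor
    by (simp add: P_def)
  moreover have "{S \<in> V4. P S \<noteq> 0} \<subseteq> Sset"
    using lin_indep4_if_entry_submatrix_det_nonzero generates_if_macaulay_det_nonzero
    by (auto simp: Sset_def P_def)
  moreover have "generically_injective S" if "S \<in> {S \<in> V4. P S \<noteq> 0}" for S
    using that witness_point_nonzero generically_injective_if_fibre_minor_nonzero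
    by (auto simp: P_def)
  ultimately show ?thesis by blast
qed

end
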